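(* Let $k$ be any field, $S=k[x_1,x_2,x_3,x_4]$, and let $M\subseteq S$ be a monomial ideal. Then for every $i\ge 0$, $$\beta_i(S/M)=\sum_{m\in\mathbb{T}_M}\beta_{i,y_m}(T/M''_m),$$ where the sum runs over the set of distinct multidegrees $m$ of the Taylor resolution $\mathbb{T}_M$.
   Context: $\beta_i(S/M)=\dim_k\operatorname{Tor}_i^S(S/M,k)$ is the total Betti number and $\beta_{i,\mu}$ denotes the multigraded Betti number in multidegree $\mu$. Let $G$ be the minimal monomial generating set of $M$. The multidegrees of the Taylor resolution $\mathbb{T}_M$ are the monomials $\operatorname{lcm}(D)$, $D\subseteq G$ ($\operatorname{lcm}(\emptyset)=1$); "$m\in\mathbb{T}_M$" ranges over the set of distinct such monomials. For such $m$, let $G_m=\{g\in G: g\mid m\}=\{m_1,\dots,m_q\}$, write $m_i=x_1^{\alpha_{i1}}\cdots x_4^{\alpha_{i4}}$, and $m=x_1^{\alpha_1}\cdots x_4^{\alpha_4}$ with $\alpha_j=\max_i\alpha_{ij}$. Let $T=k[y_1,\dots,y_4]$ be a polynomial ring in new variables. The squarefree twin ideal is $M''_m=(m''_1,\dots,m''_q)\subseteq T$ with $m''_i=\prod_{j:\ \alpha_j>0,\ \alpha_{ij}=\alpha_j} y_j$, and $y_m=\prod_{j:\ \alpha_j>0}y_j$. *)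

theory Defs
  imports Complex_Main "HOL-Library.Function_Algebras"
begin

text \<open>Monomials of \<open>k[x_0,...,x_(n-1)]\<close> are encoded by exponent vectors
  \<open>nat \<Rightarrow> nat\<close> vanishing outside \<open>{0..<n}\<close>; divisibility is the pointwise order.\<close>

definition monoms :: "nat \<Rightarrow> (nat \<Rightarrow> nat) set" where
  "monoms n = {a. \<forall>j\<ge>n. a j = 0}"

text \<open>A monomial ideal is represented by the set of (exponent vectors of) monomials
  it contains; a set of monomials is the monomial set of a monomial ideal iff it is
  closed under multiplication by monomials.\<close>

definition monomial_ideal :: "nat \<Rightarrow> (nat \<Rightarrow> nat) set \<Rightarrow> bool" where
  "monomial_ideal n Mon \<longleftrightarrow> Mon \<subseteq> monoms n \<and>
     (\<forall>a\<in>Mon. \<forall>b\<in>monoms n. a \<le> b \<longrightarrow> b \<in> Mon)"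

definition min_gens :: "(nat \<Rightarrow> nat) set \<Rightarrow> (nat \<Rightarrow> nat) set" where
  "min_gens Mon = {g\<in>Mon. \<forall>h\<in>Mon. h \<le> g \<longrightarrow> h = g}"

definition lcm_mon :: "(nat \<Rightarrow> nat) set \<Rightarrow> (nat \<Rightarrow> nat)" where
  "lcm_mon D = (\<lambda>j. Max (insert 0 ((\<lambda>g. g j) ` D)))"

definition taylor_mdegs :: "(nat \<Rightarrow> nat) set \<Rightarrow> (nat \<Rightarrow> nat) set" where
  "taylor_mdegs G = {lcm_mon D | D. D \<subseteq> G \<and> finite D}"

definition twin_gen :: "nat \<Rightarrow> (nat \<Rightarrow> nat) \<Rightarrow> (nat \<Rightarrow> nat) \<Rightarrow> (nat \<Rightarrow> nat)" where
  "twin_gen n m g = (\<lambda>j. if j < n \<and> 0 < m j \<and> g j = m j then 1 else 0)"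

definition twin_ideal :: "nat \<Rightarrow> (nat \<Rightarrow> nat) set \<Rightarrow> (nat \<Rightarrow> nat) \<Rightarrow> (nat \<Rightarrow> nat) set" where
  "twin_ideal n Mon m =
     {b\<in>monoms n. \<exists>g\<in>min_gens Mon. g \<le> m \<and> twin_gen n m g \<le> b}"

definition y_mon :: "nat \<Rightarrow> (nat \<Rightarrow> nat) \<Rightarrow> (nat \<Rightarrow> nat)" where
  "y_mon n m = (\<lambda>j. if j < n \<and> 0 < m j then 1 else 0)"

text \<open>Multigraded Betti numbers \<open>\<beta>_{i,\<mu>}(S/M) = dim_k Tor_i^S(S/M,k)_\<mu>\<close>, computed
  as \<open>Tor_i^S(k,S/M)\<close> via the Koszul resolution of \<open>k\<close>: the homology in
  homological degree \<open>i\<close> and multidegree \<open>\<mu>\<close> of \<open>K(x_0,..,x_(n-1)) \<otimes> S/M\<close>.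
  The degree \<open>(i,\<mu>)\<close> part of this complex has \<open>k\<close>-basis the elements
  \<open>x^(\<mu>-F) e_F\<close> with \<open>F \<subseteq> {0..<n}\<close>, \<open>|F| = i\<close>, \<open>x^F | x^\<mu>\<close>, \<open>x^(\<mu>-F) \<notin> M\<close>.\<close>

definition ind_set :: "nat set \<Rightarrow> (nat \<Rightarrow> nat)" where
  "ind_set F = (\<lambda>j. if j \<in> F then 1 else 0)"

definition kbasis :: "nat \<Rightarrow> (nat \<Rightarrow> nat) set \<Rightarrow> nat \<Rightarrow> (nat \<Rightarrow> nat) \<Rightarrow> nat set set" where
  "kbasis n Mon i \<mu> = {F. F \<subseteq> {0..<n} \<and> card F = i \<and> ind_set F \<le> \<mu> \<and> \<mu> - ind_set F \<notin> Mon}"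

definition kchains :: "'k::field itself \<Rightarrow> nat \<Rightarrow> (nat \<Rightarrow> nat) set \<Rightarrow> nat \<Rightarrow> (nat \<Rightarrow> nat)
    \<Rightarrow> (nat set \<Rightarrow> 'k) set" where
  "kchains _ n Mon i \<mu> = {c. \<forall>F. F \<notin> kbasis n Mon i \<mu> \<longrightarrow> c F = 0}"

text \<open>Koszul differential \<open>e_F \<mapsto> \<Sum>_{j\<in>F} (-1)^{|{l\<in>F. l<j}|} x_j e_{F-{j}}\<close>
  from degree \<open>i+1\<close> to degree \<open>i\<close> (terms landing in \<open>M\<close> vanish).\<close>
definition kdiff :: "nat \<Rightarrow> (nat \<Rightarrow> nat) set \<Rightarrow> nat \<Rightarrow> (nat \<Rightarrow> nat)
    \<Rightarrow> (nat set \<Rightarrow> 'k::field) \<Rightarrow> (nat set \<Rightarrow> 'k)" where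
  "kdiff n Mon i \<mu> c = (\<lambda>F'. if F' \<in> kbasis n Mon i \<mu> then
      (\<Sum>j\<in>{0..<n} - F'. (- 1) ^ card {l\<in>F'. l < j} * c (insert j F'))
     else 0)"

definition kscale :: "'k::field \<Rightarrow> (nat set \<Rightarrow> 'k) \<Rightarrow> (nat set \<Rightarrow> 'k)" where
  "kscale a c = (\<lambda>F. a * c F)"

definition kcycles :: "'k::field itself \<Rightarrow> nat \<Rightarrow> (nat \<Rightarrow> nat) set \<Rightarrow> nat \<Rightarrow> (nat \<Rightarrow> nat)
    \<Rightarrow> (nat set \<Rightarrow> 'k) set" where
  "kcycles K n Mon i \<mu> =
     (case i of 0 \<Rightarrow> kchains K n Mon 0 \<mu>
      | Suc i' \<Rightarrow> {c\<in>kchains K n Mon i \<mu>. kdiff n Mon i' \<mu> c = (\<lambda>_. 0)})"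

definition kboundaries :: "'k::field itself \<Rightarrow> nat \<Rightarrow> (nat \<Rightarrow> nat) set \<Rightarrow> nat \<Rightarrow> (nat \<Rightarrow> nat)
    \<Rightarrow> (nat set \<Rightarrow> 'k) set" where
  "kboundaries K n Mon i \<mu> = kdiff n Mon i \<mu> ` kchains K n Mon (Suc i) \<mu>"

definition betti_mdeg :: "'k::field itself \<Rightarrow> nat \<Rightarrow> (nat \<Rightarrow> nat) set \<Rightarrow> nat \<Rightarrow> (nat \<Rightarrow> nat) \<Rightarrow> nat" where
  "betti_mdeg K n Mon i \<mu> =
     (if \<mu> \<in> monoms n then
        vector_space.dim (kscale :: 'k \<Rightarrow> _) (kcycles K n Mon i \<mu>)
        - vector_space.dim (kscale :: 'k \<Rightarrow> _) (kboundaries K n Mon i \<mu>)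
      else 0)"

text \<open>Total Betti number \<open>\<beta>_i = \<Sum>_\<mu> \<beta>_{i,\<mu>}\<close> (only finitely many are nonzero).\<close>
definition betti :: "'k::field itself \<Rightarrow> nat \<Rightarrow> (nat \<Rightarrow> nat) set \<Rightarrow> nat \<Rightarrow> nat" where
  "betti K n Mon i = (\<Sum>\<mu>\<in>{\<mu>\<in>monoms n. betti_mdeg K n Mon i \<mu> \<noteq> 0}. betti_mdeg K n Mon i \<mu>)"

end

theory Submission
  imports Defs "HOL-Library.Indicator_Function"
begin

(* In multidegree \<mu> the Koszul complex K(x) \<otimes> S/M has basis the e\<^sub>F with F \<subseteq> supp \<mu> and
   x\<^bsup>\<mu> - F\<^esup> \<notin> M, and x\<^bsup>\<mu> - F\<^esup> \<in> M iff some minimal generator g divides x\<^sup>\<mu> with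
   g\<^sub>j < \<mu>\<^sub>j for all j \<in> F.  The same criterion describes membership of y\<^sub>\<mu> - F in the twin
   ideal M''\<^sub>\<mu>, so the two complexes coincide and \<beta>\<^bsub>i,\<mu>\<^esub>(S/M) = \<beta>\<^bsub>i,y\<^sub>\<mu>\<^esub>(T/M''\<^sub>\<mu>).
   If \<mu> is not the lcm of a set of minimal generators, the lcm of those dividing x\<^sup>\<mu> falls
   short of \<mu> in some coordinate j; the criterion then ignores j, wedging with e\<^sub>j is a
   contracting homotopy, and \<beta>\<^bsub>i,\<mu>\<^esub>(S/M) = 0.  Summing over \<mu> gives the formula; by
   Dickson's lemma there are only finitely many minimal generators, hence finitely many
   Taylor multidegrees. *)

section \<open>Minimal generators and the lcm lattice\<close>

lemma finite_monoms_below: "finite {b \<in> monoms n. b \<le> (a :: nat \<Rightarrow> nat)}"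
proof -
  have "{b \<in> monoms n. b \<le> a} \<subseteq>
      {f. \<forall>j. (j \<in> {..<n} \<longrightarrow> f j \<in> {..Max (a ` {..<n})}) \<and> (j \<notin> {..<n} \<longrightarrow> f j = 0)}"
  proof (intro subsetI CollectI allI conjI impI)
    fix b j assume b: "b \<in> {b \<in> monoms n. b \<le> a}"
    show "b j = 0" if "j \<notin> {..<n}"
      using b that by (simp add: monoms_def)
    assume "j \<in> {..<n}"
    then have "a j \<le> Max (a ` {..<n})"
      by (intro Max_ge) auto
    moreover have "b j \<le> a j"
      using b by (simp add: le_fun_def)
    ultimately show "b j \<in> {..Max (a ` {..<n})}"
      by simp
  qed
  moreover have "finite \<dots>"
    by (rule finite_set_of_finite_funs) auto
  ultimately show ?thesis
    by (rule finite_subset)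
qed

lemma min_gen_below:
  assumes "monomial_ideal n Mon" "a \<in> Mon"
  shows "\<exists>g\<in>min_gens Mon. g \<le> a"
proof -
  let ?A = "{b \<in> Mon. b \<le> a}"
  have "?A \<subseteq> {b \<in> monoms n. b \<le> a}"
    using assms(1) by (auto simp: monomial_ideal_def)
  then have "finite ?A"
    using finite_monoms_below finite_subset by blast
  moreover have "?A \<noteq> {}"
    using assms(2) by auto
  ultimately obtain g where g: "g \<in> ?A" "\<forall>b\<in>?A. b \<le> g \<longrightarrow> g = b"
    by (blast dest: finite_has_minimal)
  have "g \<in> min_gens Mon"
    unfolding min_gens_def
  proof (intro CollectI conjI ballI impI)
    show "g \<in> Mon"
      using g(1) by simp
    fix h assume "h \<in> Mon" "h \<le> g"
    moreover from this have "h \<le> a"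
      using g(1) by (simp add: order_trans)
    ultimately show "h = g"
      using g(2) by blast
  qed
  then show ?thesis
    using g(1) by blast
qed

lemma dickson_finite_antichain:
  fixes S :: "('a \<Rightarrow> nat) set"
  assumes "finite J"
    and "\<forall>a\<in>S. \<forall>b\<in>S. a \<le> b \<longrightarrow> a = b"
    and "\<forall>a\<in>S. \<forall>b\<in>S. \<forall>j. j \<notin> J \<longrightarrow> a j = b j"
  shows "finite S"
  using assms
proof (induction "card J" arbitrary: J S rule: less_induct)
  case less
  show ?case
  proof (cases "S = {}")
    case False
    then obtain a where a: "a \<in> S"
      by blast
    have "S \<subseteq> insert a (\<Union>l\<in>J. \<Union>c\<in>{..<a l}. {g \<in> S. g l = c})"
    proof
      fix g assume g: "g \<in> S"
      show "g \<in> insert a (\<Union>l\<in>J. \<Union>c\<in>{..<a l}. {g \<in> S. g l = c})"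
      proof (cases "a \<le> g")
        case True
        then show ?thesis
          using less.prems(2) a g by blast
      next
        case False
        then obtain l where "g l < a l"
          by (meson le_funI not_le)
        moreover have "l \<in> J"
          using less.prems(3) a g calculation by force
        ultimately show ?thesis
          using g by blast
      qed
    qed
    moreover have "finite {g \<in> S. g l = c}" if "l \<in> J" for l c
      using less.prems that card_Diff1_less[OF less.prems(1) that]
      by (intro less.hyps[of "J - {l}"]) auto
    ultimately show ?thesis
      using less.prems(1) by (meson finite.insertI finite_UN_I finite_lessThan finite_subset)
  qed simp
qed

lemma finite_min_gens:
  assumes "monomial_ideal n Mon"
  shows "finite (min_gens Mon)"
proof (rule dickson_finite_antichain[of "{0..<n}"])
  have "min_gens Mon \<subseteq> monoms n"
    using assms by (auto simp: monomial_ideal_def min_gens_def)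
  then show "\<forall>a\<in>min_gens Mon. \<forall>b\<in>min_gens Mon. \<forall>j. j \<notin> {0..<n} \<longrightarrow> a j = b j"
  proof (intro ballI allI impI)
    fix a b j
    assume "min_gens Mon \<subseteq> monoms n" "a \<in> min_gens Mon" "b \<in> min_gens Mon" "j \<notin> {0..<n}"
    then have "a \<in> monoms n" "b \<in> monoms n" "n \<le> j"
      by auto
    then show "a j = b j"
      by (simp add: monoms_def)
  qed
  show "\<forall>a\<in>min_gens Mon. \<forall>b\<in>min_gens Mon. a \<le> b \<longrightarrow> a = b"
    unfolding min_gens_def by blast
qed simp

lemma finite_taylor_mdegs: "finite G \<Longrightarrow> finite (taylor_mdegs G)"
proof -
  assume "finite G"
  then have "taylor_mdegs G = lcm_mon ` Pow G"
    by (auto simp: taylor_mdegs_def finite_subset)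
  then show ?thesis
    using \<open>finite G\<close> by simp
qed

lemma lcm_mon_le:
  assumes "finite D" "\<And>g. g \<in> D \<Longrightarrow> g \<le> \<mu>"
  shows "lcm_mon D \<le> \<mu>"
proof (rule le_funI)
  fix j
  show "lcm_mon D j \<le> \<mu> j"
    unfolding lcm_mon_def using assms by (subst Max_le_iff) (auto dest: le_funD)
qed

lemma le_lcm_mon: "finite D \<Longrightarrow> g \<in> D \<Longrightarrow> g \<le> lcm_mon D"
  unfolding lcm_mon_def by (intro le_funI Max_ge) auto

lemma taylor_mdegs_subset_monoms:
  assumes "monomial_ideal n Mon"
  shows "taylor_mdegs (min_gens Mon) \<subseteq> monoms n"
proof
  fix m assume "m \<in> taylor_mdegs (min_gens Mon)"
  then obtain D where D: "m = lcm_mon D" "D \<subseteq> min_gens Mon"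
    by (auto simp: taylor_mdegs_def)
  then have "D \<subseteq> monoms n"
    using assms by (auto simp: monomial_ideal_def min_gens_def)
  have "m j = 0" if "n \<le> j" for j
  proof -
    have "insert 0 ((\<lambda>g. g j) ` D) = {0}"
      using that \<open>D \<subseteq> monoms n\<close> by (auto simp: monoms_def)
    then show ?thesis
      by (simp only: D(1) lcm_mon_def Max_singleton)
  qed
  then show "m \<in> monoms n"
    by (simp add: monoms_def)
qed

section \<open>Twin ideals\<close>

lemma ind_set_le_iff: "ind_set F \<le> \<mu> \<longleftrightarrow> (\<forall>j\<in>F. 0 < \<mu> j)"
  by (auto simp: ind_set_def le_fun_def)

lemma le_diff_ind_set_iff:
  assumes "ind_set F \<le> \<mu>"
  shows "g \<le> \<mu> - ind_set F \<longleftrightarrow> g \<le> \<mu> \<and> (\<forall>j\<in>F. g j < \<mu> j)"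
proof -
  have "\<forall>j\<in>F. 0 < \<mu> j"
    using assms by (simp add: ind_set_le_iff)
  then have "g j \<le> \<mu> j - ind_set F j \<longleftrightarrow> g j \<le> \<mu> j \<and> (j \<in> F \<longrightarrow> g j < \<mu> j)" for j
    by (auto simp: ind_set_def)
  then show ?thesis
    unfolding le_fun_def by auto
qed

lemma diff_ind_set_mem_iff:
  assumes "monomial_ideal n Mon" "\<mu> \<in> monoms n" "ind_set F \<le> \<mu>"
  shows "\<mu> - ind_set F \<in> Mon \<longleftrightarrow> (\<exists>g\<in>min_gens Mon. g \<le> \<mu> \<and> (\<forall>j\<in>F. g j < \<mu> j))"
proof
  assume "\<mu> - ind_set F \<in> Mon"
  then show "\<exists>g\<in>min_gens Mon. g \<le> \<mu> \<and> (\<forall>j\<in>F. g j < \<mu> j)"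
    using min_gen_below[OF assms(1)] le_diff_ind_set_iff[OF assms(3)] by blast
next
  assume "\<exists>g\<in>min_gens Mon. g \<le> \<mu> \<and> (\<forall>j\<in>F. g j < \<mu> j)"
  then obtain g where "g \<in> Mon" "g \<le> \<mu> - ind_set F"
    using le_diff_ind_set_iff[OF assms(3)] by (auto simp: min_gens_def)
  moreover have "\<mu> - ind_set F \<in> monoms n"
    using assms(2) by (simp add: monoms_def)
  ultimately show "\<mu> - ind_set F \<in> Mon"
    using assms(1) by (simp add: monomial_ideal_def)
qed

lemma twin_gen_le_iff:
  assumes "F \<subseteq> {0..<n}" "ind_set F \<le> \<mu>"
  shows "twin_gen n \<mu> g \<le> y_mon n \<mu> - ind_set F \<longleftrightarrow> (\<forall>j\<in>F. g j \<noteq> \<mu> j)"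
proof -
  have "\<forall>j\<in>F. j < n \<and> 0 < \<mu> j"
    using assms by (auto simp: ind_set_le_iff)
  then have "twin_gen n \<mu> g j \<le> y_mon n \<mu> j - ind_set F j \<longleftrightarrow> (j \<in> F \<longrightarrow> g j \<noteq> \<mu> j)" for j
    by (auto simp: ind_set_def twin_gen_def y_mon_def)
  then show ?thesis
    unfolding le_fun_def by auto
qed

lemma diff_ind_set_mem_twin_ideal_iff:
  assumes "F \<subseteq> {0..<n}" "ind_set F \<le> \<mu>"
  shows "y_mon n \<mu> - ind_set F \<in> twin_ideal n Mon \<mu> \<longleftrightarrow>
    (\<exists>g\<in>min_gens Mon. g \<le> \<mu> \<and> (\<forall>j\<in>F. g j < \<mu> j))"
proof -
  have "y_mon n \<mu> - ind_set F \<in> monoms n"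
    by (simp add: monoms_def y_mon_def)
  moreover have "(\<forall>j\<in>F. g j \<noteq> \<mu> j) \<longleftrightarrow> (\<forall>j\<in>F. g j < \<mu> j)" if "g \<le> \<mu>" for g
    using that by (auto simp: le_fun_def order.strict_iff_order)
  ultimately show ?thesis
    unfolding twin_ideal_def using twin_gen_le_iff[OF assms] by auto
qed

lemma kbasis_twin_ideal:
  assumes "monomial_ideal n Mon" "\<mu> \<in> monoms n"
  shows "kbasis n (twin_ideal n Mon \<mu>) i (y_mon n \<mu>) = kbasis n Mon i \<mu>"
proof -
  have ind: "ind_set F \<le> y_mon n \<mu> \<longleftrightarrow> ind_set F \<le> \<mu>" if "F \<subseteq> {0..<n}" for F
    using that by (auto simp: ind_set_le_iff y_mon_def)
  have "F \<in> kbasis n (twin_ideal n Mon \<mu>) i (y_mon n \<mu>) \<longleftrightarrow> F \<in> kbasis n Mon i \<mu>" for F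
  proof (cases "F \<subseteq> {0..<n} \<and> ind_set F \<le> \<mu>")
    case True
    then show ?thesis
      using ind diff_ind_set_mem_iff[OF assms] diff_ind_set_mem_twin_ideal_iff[of F n \<mu> Mon]
      by (simp add: kbasis_def)
  next
    case False
    then show ?thesis
      using ind by (auto simp: kbasis_def)
  qed
  then show ?thesis
    by blast
qed

lemma betti_mdeg_eq_if_kbasis_eq:
  fixes K :: "'k::field itself"
  assumes "\<mu> \<in> monoms n \<longleftrightarrow> \<nu> \<in> monoms n" "\<And>i. kbasis n Mon i \<mu> = kbasis n Mon' i \<nu>"
  shows "betti_mdeg K n Mon i \<mu> = betti_mdeg K n Mon' i \<nu>"
proof -
  have "kdiff n Mon i \<mu> = (kdiff n Mon' i \<nu> :: (nat set \<Rightarrow> 'k) \<Rightarrow> _)"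
    "kchains K n Mon i \<mu> = kchains K n Mon' i \<nu>" for i
    unfolding kdiff_def kchains_def assms(2) by simp_all
  then show ?thesis
    unfolding betti_mdeg_def kcycles_def kboundaries_def assms(1) by (simp split: nat.split)
qed

lemma betti_mdeg_twin_ideal:
  assumes "monomial_ideal n Mon" "\<mu> \<in> monoms n"
  shows "betti_mdeg K n Mon i \<mu> = betti_mdeg K n (twin_ideal n Mon \<mu>) i (y_mon n \<mu>)"
  using assms by (intro betti_mdeg_eq_if_kbasis_eq kbasis_twin_ideal[symmetric])
    (auto simp: monoms_def y_mon_def)

section \<open>Koszul homology in one multidegree\<close>

interpretation kv: vector_space "kscale :: 'k::field \<Rightarrow> (nat set \<Rightarrow> 'k) \<Rightarrow> _"
  by unfold_locales (auto simp: kscale_def algebra_simps fun_eq_iff)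

context vector_space
begin

(* Unlike dim_mono, no finite-dimensional ambient space is needed: only T is finitely spanned. *)
lemma dim_mono_if_finite_span:
  assumes "S \<subseteq> T" "T \<subseteq> span W" "finite W"
  shows "dim S \<le> dim T"
proof -
  obtain B where B: "B \<subseteq> T" "independent B" "T \<subseteq> span B" "card B = dim T"
    by (rule basis_exists)
  have "finite B"
    using independent_span_bound[OF assms(3) B(2)] B(1) assms(2) by blast
  moreover have "S \<subseteq> span B"
    using assms(1) B(3) by blast
  ultimately show ?thesis
    using dim_le_card B(4) by metis
qed

end


lemma sum_fun_apply: "(\<Sum>x\<in>A. f x) y = (\<Sum>x\<in>A. f x y)"
  by (induction A rule: infinite_finite_induct) auto

lemma finite_kbasis: "finite (kbasis n Mon i \<mu>)"
  by (rule finite_subset[of _ "Pow {0..<n}"]) (auto simp: kbasis_def)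

lemma kchains_subset_span:
  "kchains K n Mon i \<mu> \<subseteq> kv.span ((\<lambda>F. indicator {F}) ` kbasis n Mon i \<mu> :: (nat set \<Rightarrow> 'k::field) set)"
proof
  fix c :: "nat set \<Rightarrow> 'k" assume c: "c \<in> kchains K n Mon i \<mu>"
  have "c = (\<Sum>F\<in>kbasis n Mon i \<mu>. kscale (c F) (indicator {F}))"
  proof
    fix G
    show "c G = (\<Sum>F\<in>kbasis n Mon i \<mu>. kscale (c F) (indicator {F})) G"
      using c by (cases "G \<in> kbasis n Mon i \<mu>")
        (auto simp: sum_fun_apply kscale_def indicator_def finite_kbasis kchains_def)
  qed
  also have "\<dots> \<in> kv.span ((\<lambda>F. indicator {F}) ` kbasis n Mon i \<mu>)"
    by (intro kv.span_sum kv.span_scale kv.span_base) auto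
  finally show "c \<in> kv.span ((\<lambda>F. indicator {F}) ` kbasis n Mon i \<mu>)" .
qed

(* betti_mdeg is a truncated difference of dimensions. *)
lemma betti_mdeg_eq_0_if_kcycles_subset:
  assumes "kcycles K n Mon i \<mu> \<subseteq> kboundaries K n Mon i \<mu>"
  shows "betti_mdeg K n Mon i \<mu> = 0"
proof -
  have "kboundaries K n Mon i \<mu> \<subseteq> kchains K n Mon i \<mu>"
    by (auto simp: kboundaries_def kchains_def kdiff_def)
  then have "kv.dim (kcycles K n Mon i \<mu>) \<le> kv.dim (kboundaries K n Mon i \<mu>)"
    using kv.dim_mono_if_finite_span[OF assms order_trans[OF _ kchains_subset_span]] finite_kbasis
    by blast
  then show ?thesis
    by (simp add: betti_mdeg_def)
qed

lemma kcycles_subset_kchains: "kcycles K n Mon i \<mu> \<subseteq> kchains K n Mon i \<mu>"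
  by (auto simp: kcycles_def split: nat.split)

lemma mem_kcycles_Suc_iff:
  "c \<in> kcycles K n Mon (Suc i) \<mu> \<longleftrightarrow> c \<in> kchains K n Mon (Suc i) \<mu> \<and> kdiff n Mon i \<mu> c = (\<lambda>_. 0)"
  by (simp add: kcycles_def)

definition koszul_sign :: "nat \<Rightarrow> nat set \<Rightarrow> 'a::comm_ring_1" where
  "koszul_sign j F = (- 1) ^ card {l \<in> F. l < j}"

lemma kdiff_apply:
  "kdiff n Mon i \<mu> c F = (if F \<in> kbasis n Mon i \<mu>
     then \<Sum>j\<in>{0..<n} - F. koszul_sign j F * c (insert j F) else 0)"
  by (simp add: kdiff_def koszul_sign_def)

lemma koszul_sign_square: "koszul_sign j F * koszul_sign j F = 1"
  by (simp add: koszul_sign_def power_mult_distrib[symmetric])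

lemma koszul_sign_insert:
  assumes "finite F" "j \<notin> F"
  shows "koszul_sign k (insert j F) = (if j < k then - koszul_sign k F else koszul_sign k F)"
proof -
  have "{l \<in> insert j F. l < k} = (if j < k then insert j {l \<in> F. l < k} else {l \<in> F. l < k})"
    by auto
  then show ?thesis
    using assms by (simp add: koszul_sign_def)
qed

lemma koszul_sign_swap:
  assumes "finite F" "j \<noteq> k" "j \<notin> F" "k \<notin> F"
  shows "koszul_sign k (insert j F) * koszul_sign j (insert k F) =
    - (koszul_sign k F * koszul_sign j F :: 'a::comm_ring_1)"
proof (cases "j < k")
  case True
  then have "koszul_sign k (insert j F) = (- koszul_sign k F :: 'a)"
    "koszul_sign j (insert k F) = (koszul_sign j F :: 'a)"
    using assms by (simp_all add: koszul_sign_insert)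
  then show ?thesis
    by simp
next
  case False
  then have "koszul_sign k (insert j F) = (koszul_sign k F :: 'a)"
    "koszul_sign j (insert k F) = (- koszul_sign j F :: 'a)"
    using assms by (simp_all add: koszul_sign_insert)
  then show ?thesis
    by simp
qed

(* When membership of x\<^bsup>\<mu> - F\<^esup> in M does not depend on j, multiplication by x\<^sub>j is the
   identity in multidegree \<mu>, and wedge c = e\<^sub>j \<wedge> c satisfies d(e\<^sub>j \<wedge> c) + e\<^sub>j \<wedge> dc = c. *)
locale koszul_contraction =
  fixes n :: nat and Mon :: "(nat \<Rightarrow> nat) set" and \<mu> :: "nat \<Rightarrow> nat" and j :: nat
  assumes j_less: "j < n" and pos: "0 < \<mu> j"
    and insert_mem_iff: "\<And>F. j \<notin> F \<Longrightarrow> ind_set F \<le> \<mu> \<Longrightarrow>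
      \<mu> - ind_set (insert j F) \<in> Mon \<longleftrightarrow> \<mu> - ind_set F \<in> Mon"
begin

lemma insert_mem_kbasis_iff:
  assumes "j \<notin> F"
  shows "insert j F \<in> kbasis n Mon (Suc i) \<mu> \<longleftrightarrow> F \<in> kbasis n Mon i \<mu>"
proof (cases "F \<subseteq> {0..<n} \<and> ind_set F \<le> \<mu>")
  case True
  then have "finite F"
    using finite_subset by blast
  then show ?thesis
    using True assms insert_mem_iff[OF assms] j_less pos by (simp add: kbasis_def ind_set_le_iff)
next
  case False
  then show ?thesis
    using j_less pos by (auto simp: kbasis_def ind_set_le_iff)
qed

definition wedge :: "(nat set \<Rightarrow> 'k::comm_ring_1) \<Rightarrow> nat set \<Rightarrow> 'k" where
  "wedge c F = (if j \<in> F then koszul_sign j (F - {j}) * c (F - {j}) else 0)"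

lemma wedge_insert: "j \<notin> F \<Longrightarrow> wedge c (insert j F) = koszul_sign j F * c F"
  by (simp add: wedge_def)

lemma wedge_mem_kchains:
  assumes "c \<in> kchains K n Mon i \<mu>"
  shows "wedge c \<in> kchains K n Mon (Suc i) \<mu>"
  unfolding kchains_def
proof (intro CollectI allI impI)
  fix F assume F: "F \<notin> kbasis n Mon (Suc i) \<mu>"
  show "wedge c F = 0"
  proof (cases "j \<in> F")
    case True
    then have "F - {j} \<notin> kbasis n Mon i \<mu>"
      using F insert_mem_kbasis_iff[of "F - {j}" i] by (simp add: insert_absorb)
    then show ?thesis
      using assms by (simp add: kchains_def wedge_def)
  qed (simp add: wedge_def)
qed

lemma kdiff_wedge_apply:
  assumes "F \<in> kbasis n Mon i \<mu>" "j \<notin> F"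
  shows "kdiff n Mon i \<mu> (wedge c) F = c F"
proof -
  have "kdiff n Mon i \<mu> (wedge c) F = (\<Sum>k\<in>{0..<n} - F. koszul_sign k F * wedge c (insert k F))"
    using assms(1) by (simp add: kdiff_apply)
  also have "\<dots> = (\<Sum>k\<in>{j}. koszul_sign k F * wedge c (insert k F))"
    using assms(2) j_less by (intro sum.mono_neutral_right) (simp_all add: wedge_def)
  also have "\<dots> = c F"
    using assms(2) by (simp add: wedge_insert mult.assoc[symmetric] koszul_sign_square)
  finally show ?thesis .
qed

lemma kdiff_wedge_apply_insert:
  assumes F: "F \<in> kbasis n Mon i \<mu>" "j \<notin> F" and cycle: "kdiff n Mon i \<mu> c = (\<lambda>_. 0)"
  shows "kdiff n Mon (Suc i) \<mu> (wedge c) (insert j F) = c (insert j F)"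
proof -
  have "finite F"
    using F(1) by (auto simp: kbasis_def finite_subset)
  define S where "S = (\<Sum>k\<in>{0..<n} - insert j F. koszul_sign k F * c (insert k F))"
  have "{0..<n} - F = insert j ({0..<n} - insert j F)"
    using F(2) j_less by auto
  have "kdiff n Mon i \<mu> c F = (\<Sum>k\<in>{0..<n} - F. koszul_sign k F * c (insert k F))"
    using F(1) by (simp add: kdiff_apply)
  also have "\<dots> = koszul_sign j F * c (insert j F) + S"
    unfolding \<open>{0..<n} - F = _\<close> S_def by (rule sum.insert) auto
  finally have S: "S = - (koszul_sign j F * c (insert j F))"
    using cycle by (simp add: eq_neg_iff_add_eq_0 add.commute)
  have "insert j F \<in> kbasis n Mon (Suc i) \<mu>"
    using F insert_mem_kbasis_iff by blast
  then have "kdiff n Mon (Suc i) \<mu> (wedge c) (insert j F) =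
      (\<Sum>k\<in>{0..<n} - insert j F. koszul_sign k (insert j F) * wedge c (insert k (insert j F)))"
    unfolding kdiff_apply by simp
  also have "\<dots> = (\<Sum>k\<in>{0..<n} - insert j F. - (koszul_sign j F * (koszul_sign k F * c (insert k F))))"
  proof (rule sum.cong[OF refl])
    fix k assume "k \<in> {0..<n} - insert j F"
    then have k: "j \<noteq> k" "k \<notin> F"
      by auto
    have "wedge c (insert k (insert j F)) = wedge c (insert j (insert k F))"
      by (simp only: insert_commute)
    also have "\<dots> = koszul_sign j (insert k F) * c (insert k F)"
      using F(2) k(1) by (simp add: wedge_insert)
    finally have "koszul_sign k (insert j F) * wedge c (insert k (insert j F)) =
        (koszul_sign k (insert j F) * koszul_sign j (insert k F)) * c (insert k F)"
      by (simp only: mult.assoc)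
    also have "\<dots> = - (koszul_sign k F * koszul_sign j F) * c (insert k F)"
      by (simp only: koszul_sign_swap[OF \<open>finite F\<close> k(1) F(2) k(2)])
    finally show "koszul_sign k (insert j F) * wedge c (insert k (insert j F)) =
        - (koszul_sign j F * (koszul_sign k F * c (insert k F)))"
      by (simp add: algebra_simps)
  qed
  also have "\<dots> = - (koszul_sign j F * S)"
    by (simp add: S_def sum_distrib_left sum_negf)
  also have "\<dots> = c (insert j F)"
    using S by (simp add: mult.assoc[symmetric] koszul_sign_square)
  finally show ?thesis .
qed

lemma kdiff_wedge:
  assumes "c \<in> kcycles K n Mon i \<mu>"
  shows "kdiff n Mon i \<mu> (wedge c) = c"
proof
  fix F'
  have c: "c \<in> kchains K n Mon i \<mu>"
    using assms kcycles_subset_kchains by blast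
  show "kdiff n Mon i \<mu> (wedge c) F' = c F'"
  proof (cases "F' \<in> kbasis n Mon i \<mu>")
    case False
    then show ?thesis
      using c by (simp add: kdiff_apply kchains_def)
  next
    case True
    show ?thesis
    proof (cases "j \<in> F'")
      case False
      with True show ?thesis
        by (rule kdiff_wedge_apply)
    next
      case j: True
      define F where "F = F' - {j}"
      have F': "F' = insert j F" "j \<notin> F"
        using j by (auto simp: F_def)
      have "finite F'"
        using True by (auto simp: kbasis_def intro: finite_subset)
      then obtain i' where i': "i = Suc i'"
        using True j by (cases i) (auto simp: kbasis_def)
      have "F \<in> kbasis n Mon i' \<mu>"
        using True insert_mem_kbasis_iff[OF F'(2)] by (simp add: F' i')
      moreover have "kdiff n Mon i' \<mu> c = (\<lambda>_. 0)"
        using assms by (simp add: i' mem_kcycles_Suc_iff)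
      ultimately show ?thesis
        unfolding F'(1) i' by (rule kdiff_wedge_apply_insert[OF _ F'(2)])
    qed
  qed
qed

lemma kcycles_subset_kboundaries: "kcycles K n Mon i \<mu> \<subseteq> kboundaries K n Mon i \<mu>"
proof
  fix c assume c: "c \<in> kcycles K n Mon i \<mu>"
  then have "wedge c \<in> kchains K n Mon (Suc i) \<mu>"
    using wedge_mem_kchains kcycles_subset_kchains by blast
  moreover have "c = kdiff n Mon i \<mu> (wedge c)"
    using kdiff_wedge[OF c] by simp
  ultimately show "c \<in> kboundaries K n Mon i \<mu>"
    unfolding kboundaries_def by blast
qed

end


section \<open>Betti numbers live on the lcm lattice\<close>

lemma betti_mdeg_eq_0_if_not_taylor_mdeg:
  assumes ideal: "monomial_ideal n Mon" and \<mu>: "\<mu> \<in> monoms n"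
    and not_taylor: "\<mu> \<notin> taylor_mdegs (min_gens Mon)"
  shows "betti_mdeg K n Mon i \<mu> = 0"
proof -
  define G where "G = {g \<in> min_gens Mon. g \<le> \<mu>}"
  have "finite G"
    using finite_min_gens[OF ideal] by (simp add: G_def)
  then have "lcm_mon G \<in> taylor_mdegs (min_gens Mon)"
    by (auto simp: taylor_mdegs_def G_def)
  then obtain j where "lcm_mon G j \<noteq> \<mu> j"
    using not_taylor by (metis ext)
  moreover have "lcm_mon G \<le> \<mu>"
    using \<open>finite G\<close> by (rule lcm_mon_le) (simp add: G_def)
  ultimately have j: "lcm_mon G j < \<mu> j"
    by (simp add: le_fun_def order.strict_iff_order)
  have below: "g j < \<mu> j" if "g \<in> min_gens Mon" "g \<le> \<mu>" for g
    using le_funD[OF le_lcm_mon[OF \<open>finite G\<close>], of g j] that j by (simp add: G_def)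
  have "j < n"
    using \<mu> j by (auto simp: monoms_def not_less[symmetric])
  interpret koszul_contraction n Mon \<mu> j
  proof
    show "j < n" "0 < \<mu> j"
      using \<open>j < n\<close> j by simp_all
    fix F assume "j \<notin> F" "ind_set F \<le> \<mu>"
    moreover from this have "ind_set (insert j F) \<le> \<mu>"
      using \<open>0 < \<mu> j\<close> by (simp add: ind_set_le_iff)
    ultimately show "\<mu> - ind_set (insert j F) \<in> Mon \<longleftrightarrow> \<mu> - ind_set F \<in> Mon"
      using below by (simp add: diff_ind_set_mem_iff[OF ideal \<mu>]) blast
  qed
  show ?thesis
    by (rule betti_mdeg_eq_0_if_kcycles_subset[OF kcycles_subset_kboundaries])
qed

lemma betti_eq_sum_taylor_mdegs:
  assumes "monomial_ideal n Mon"
  shows "betti K n Mon i = (\<Sum>\<mu>\<in>taylor_mdegs (min_gens Mon). betti_mdeg K n Mon i \<mu>)"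
  unfolding betti_def
proof (rule sum.mono_neutral_left)
  show "finite (taylor_mdegs (min_gens Mon))"
    by (rule finite_taylor_mdegs[OF finite_min_gens[OF assms]])
  show "{\<mu> \<in> monoms n. betti_mdeg K n Mon i \<mu> \<noteq> 0} \<subseteq> taylor_mdegs (min_gens Mon)"
  proof
    fix \<mu> assume "\<mu> \<in> {\<mu> \<in> monoms n. betti_mdeg K n Mon i \<mu> \<noteq> 0}"
    then show "\<mu> \<in> taylor_mdegs (min_gens Mon)"
      using betti_mdeg_eq_0_if_not_taylor_mdeg[OF assms, of \<mu> K i] by auto
  qed
  show "\<forall>\<mu>\<in>taylor_mdegs (min_gens Mon) - {\<mu> \<in> monoms n. betti_mdeg K n Mon i \<mu> \<noteq> 0}.
      betti_mdeg K n Mon i \<mu> = 0"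
    using taylor_mdegs_subset_monoms[OF assms] by blast
qed

theorem corollary9:
  fixes Mon :: "(nat \<Rightarrow> nat) set" and i :: nat
  assumes "monomial_ideal 4 Mon"
  shows "betti TYPE('k::field) 4 Mon i =
    (\<Sum>m\<in>taylor_mdegs (min_gens Mon). betti_mdeg TYPE('k) 4 (twin_ideal 4 Mon m) i (y_mon 4 m))"
proof -
  have "betti TYPE('k) 4 Mon i = (\<Sum>m\<in>taylor_mdegs (min_gens Mon). betti_mdeg TYPE('k) 4 Mon i m)"
    using assms by (rule betti_eq_sum_taylor_mdegs)
  also have "\<dots> = (\<Sum>m\<in>taylor_mdegs (min_gens Mon). betti_mdeg TYPE('k) 4 (twin_ideal 4 Mon m) i (y_mon 4 m))"
    using taylor_mdegs_subset_monoms[OF assms]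
    by (intro sum.cong refl betti_mdeg_twin_ideal[OF assms]) blast
  finally show ?thesis .
qed

end
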